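(* Let $R$ be a commutative Noetherian local ring and $M,N$ finitely generated $R$-modules with $\underline{\mathrm{ann}}_R(M)\subseteq\underline{\mathrm{ann}}_R(N)$. If $M\in\mathcal E(R)$, then $M\oplus N\in\mathcal E(R)$. In particular, if $M\in\mathcal E(R)$ then $M\oplus M^*\in\mathcal E(R)$, where $M^*=\mathrm{Hom}_R(M,R)$.
   Context: All modules are finitely generated. $\underline{\mathrm{ann}}_R(M)=\mathrm{ann}_R\underline{\mathrm{End}}_R(M)$, where $\underline{\mathrm{End}}_R(M)$ is $\mathrm{End}_R(M)$ modulo endomorphisms factoring through a free module. $\mathrm{ARann}_R(M)=\bigcap_{i>0}\mathrm{ann}_R\mathrm{Ext}^i_R(M,M\oplus R)$. $\mathcal{E}(R)$ is the full subcategory of modules $M$ with $\underline{\mathrm{ann}}_R(M)=\mathrm{ARann}_R(M)$. *)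

theory Defs
  imports Complex_Main "HOL-Library.Product_Plus"
begin

definition is_ideal :: "'r::comm_ring_1 set \<Rightarrow> bool" where
  "is_ideal I \<longleftrightarrow> 0 \<in> I \<and> (\<forall>a\<in>I. \<forall>b\<in>I. a + b \<in> I) \<and> (\<forall>r. \<forall>a\<in>I. r * a \<in> I)"

definition maximal_ideal :: "'r::comm_ring_1 set \<Rightarrow> bool" where
  "maximal_ideal P \<longleftrightarrow> is_ideal P \<and> P \<noteq> UNIV \<and>
     (\<forall>J. is_ideal J \<and> P \<subseteq> J \<longrightarrow> J = P \<or> J = UNIV)"

text \<open>Noetherian: every ideal is finitely generated (the ideal generated by S is the
  span of S in R regarded as a module over itself).\<close>
definition noetherian_ring :: "'r::comm_ring_1 itself \<Rightarrow> bool" where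
  "noetherian_ring _ \<longleftrightarrow>
     (\<forall>I::'r set. is_ideal I \<longrightarrow> (\<exists>S. finite S \<and> I = module.span ((*)::'r\<Rightarrow>'r\<Rightarrow>'r) S))"

definition local_ring :: "'r::comm_ring_1 itself \<Rightarrow> bool" where
  "local_ring _ \<longleftrightarrow> (\<exists>!P::'r set. maximal_ideal P)"

definition fin_gen :: "('r::comm_ring_1 \<Rightarrow> 'm::ab_group_add \<Rightarrow> 'm) \<Rightarrow> bool" where
  "fin_gen s \<longleftrightarrow> module s \<and> (\<exists>S. finite S \<and> module.span s S = UNIV)"

definition dsum_scale ::
  "('r::comm_ring_1 \<Rightarrow> 'm::ab_group_add \<Rightarrow> 'm) \<Rightarrow> ('r \<Rightarrow> 'n::ab_group_add \<Rightarrow> 'n) \<Rightarrow> 'r \<Rightarrow> 'm \<times> 'n \<Rightarrow> 'm \<times> 'n" where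
  "dsum_scale s1 s2 r x = (s1 r (fst x), s2 r (snd x))"

text \<open>r annihilates the stable endomorphism ring iff for every endomorphism f of M,
  r f factors through a (finitely generated) free module R^n, i.e. r f = \<beta> \<circ> \<alpha>
  with \<alpha> = (a_0,...,a_{n-1}) : M \<rightarrow> R^n and \<beta>(e_j) = h_j.\<close>
definition stable_ann :: "('r::comm_ring_1 \<Rightarrow> 'm::ab_group_add \<Rightarrow> 'm) \<Rightarrow> 'r set" where
  "stable_ann s = {r. \<forall>f. module_hom s s f \<longrightarrow>
      (\<exists>(n::nat) (a::nat \<Rightarrow> 'm \<Rightarrow> 'r) (h::nat \<Rightarrow> 'm).
         (\<forall>j<n. module_hom s ((*)::'r\<Rightarrow>'r\<Rightarrow>'r) (a j)) \<and>
         (\<forall>x. s r (f x) = (\<Sum>j<n. s (a j x) (h j))))}"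

text \<open>A free resolution of M by finitely generated free modules
  \<dots> \<rightarrow> R^{n 2} \<rightarrow> R^{n 1} \<rightarrow> R^{n 0} \<rightarrow> M \<rightarrow> 0.
  Vectors of R^k are functions nat \<Rightarrow> 'r (only indices < k matter);
  d i (for i \<ge> 1) is the matrix of R^{n i} \<rightarrow> R^{n (i-1)}, entries d i k j with
  k < n (i-1), j < n i; the augmentation sends e_j to g j.\<close>

definition matvec :: "(nat \<Rightarrow> nat \<Rightarrow> 'r::comm_ring_1) \<Rightarrow> nat \<Rightarrow> (nat \<Rightarrow> 'r) \<Rightarrow> nat \<Rightarrow> 'r" where
  "matvec A m b k = (\<Sum>j<m. A k j * b j)"

definition free_resolution ::
  "('r::comm_ring_1 \<Rightarrow> 'm::ab_group_add \<Rightarrow> 'm) \<Rightarrow> (nat \<Rightarrow> nat) \<Rightarrow> (nat \<Rightarrow> nat \<Rightarrow> nat \<Rightarrow> 'r) \<Rightarrow> (nat \<Rightarrow> 'm) \<Rightarrow> bool" where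
  "free_resolution s n d g \<longleftrightarrow>
     \<comment> \<open>augmentation surjective\<close>
     (\<forall>x. \<exists>a. x = (\<Sum>j<n 0. s (a j) (g j))) \<and>
     \<comment> \<open>exactness at R^{n 0}: ker of augmentation = image of d 1\<close>
     (\<forall>a. (\<Sum>j<n 0. s (a j) (g j)) = 0 \<longleftrightarrow>
          (\<exists>b. \<forall>k<n 0. a k = matvec (d 1) (n 1) b k)) \<and>
     \<comment> \<open>exactness at R^{n i}, i \<ge> 1: ker d i = image of d (i+1)\<close>
     (\<forall>i\<ge>1. \<forall>b. (\<forall>k<n (i - 1). matvec (d i) (n i) b k = 0) \<longleftrightarrow>
          (\<exists>c. \<forall>j<n i. b j = matvec (d (i + 1)) (n (i + 1)) c j))"

text \<open>Annihilator of Ext^i_R(M,X), i \<ge> 1, computed from a free resolution: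
  Hom(R^{n i}, X) = X^{n i}; a cochain x is a cocycle iff x \<circ> d (i+1) = 0, and a coboundary iff
  x = y \<circ> d i for some y \<in> X^{n (i-1)}.\<close>
definition ann_Ext_res ::
  "nat \<Rightarrow> (nat \<Rightarrow> nat) \<Rightarrow> (nat \<Rightarrow> nat \<Rightarrow> nat \<Rightarrow> 'r::comm_ring_1) \<Rightarrow> ('r \<Rightarrow> 'x::ab_group_add \<Rightarrow> 'x) \<Rightarrow> 'r set" where
  "ann_Ext_res i n d t = {r. \<forall>x::nat \<Rightarrow> 'x.
      (\<forall>l<n (i + 1). (\<Sum>k<n i. t (d (i + 1) k l) (x k)) = 0) \<longrightarrow>
      (\<exists>y::nat \<Rightarrow> 'x. \<forall>k<n i. t r (x k) = (\<Sum>j<n (i - 1). t (d i j k) (y j)))}"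

text \<open>Ext is independent of the chosen resolution; we take the annihilator as computed
  by any free resolution of M.\<close>
definition ann_Ext ::
  "nat \<Rightarrow> ('r::comm_ring_1 \<Rightarrow> 'm::ab_group_add \<Rightarrow> 'm) \<Rightarrow> ('r \<Rightarrow> 'x::ab_group_add \<Rightarrow> 'x) \<Rightarrow> 'r set" where
  "ann_Ext i s t = {r. \<forall>n d g. free_resolution s n d g \<longrightarrow> r \<in> ann_Ext_res i n d t}"

definition ARann :: "('r::comm_ring_1 \<Rightarrow> 'm::ab_group_add \<Rightarrow> 'm) \<Rightarrow> 'r set" where
  "ARann s = (\<Inter>i\<in>{i. i > 0}. ann_Ext i s (dsum_scale s ((*)::'r\<Rightarrow>'r\<Rightarrow>'r)))"

definition in_E :: "('r::comm_ring_1 \<Rightarrow> 'm::ab_group_add \<Rightarrow> 'm) \<Rightarrow> bool" where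
  "in_E s \<longleftrightarrow> stable_ann s = ARann s"

text \<open>D (with scalar multiplication sD) is isomorphic to M^* = Hom_R(M,R) via \<phi>,
  where Hom_R(M,R) carries the pointwise structure (r f)(x) = r * f x.\<close>
definition is_dual_via ::
  "('r::comm_ring_1 \<Rightarrow> 'm::ab_group_add \<Rightarrow> 'm) \<Rightarrow> ('r \<Rightarrow> 'd::ab_group_add \<Rightarrow> 'd) \<Rightarrow> ('d \<Rightarrow> 'm \<Rightarrow> 'r) \<Rightarrow> bool" where
  "is_dual_via s sD \<phi> \<longleftrightarrow>
     bij_betw \<phi> UNIV {f. module_hom s ((*)::'r\<Rightarrow>'r\<Rightarrow>'r) f} \<and>
     (\<forall>a b x. \<phi> (a + b) x = \<phi> a x + \<phi> b x) \<and>
     (\<forall>r a x. \<phi> (sD r a) x = r * \<phi> a x)"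

end

theory Submission
  imports Defs
begin

text \<open>Write \<open>ann(M)\<close> for the stable annihilator. If \<open>r \<cdot> id\<^sub>M\<close> factors through a free
  module, it lifts to an endomorphism of a free resolution \<open>F\<close> of \<open>M\<close> that factors through \<open>M\<close>,
  and multiplication by \<open>r\<close> on \<open>F\<close> is then null-homotopic in positive degrees; so
  \<open>ann(M) \<subseteq> ARann(M)\<close> for every module. Resolving \<open>M \<oplus> N\<close> by the direct sum of resolutions,
  and using that \<open>M \<oplus> R\<close> is a retract of \<open>M \<oplus> N \<oplus> R\<close>, gives
  \<open>ARann(M \<oplus> N) \<subseteq> ARann(M) = ann(M) = ann(M) \<inter> ann(N)\<close>, and factorisations of \<open>r \<cdot> id\<close> on
  both summands combine to one on \<open>M \<oplus> N\<close>. Dualising a factorisation of \<open>r \<cdot> id\<^sub>M\<close> gives one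
  of \<open>r \<cdot> id\<^sub>M\<^sub>*\<close>, so the second claim is the first with \<open>N = M\<^sup>*\<close>. Noetherianity is needed
  only to resolve \<open>N\<close> and the finitely generated \<open>M\<^sup>*\<close>.\<close>

definition matmul :: "(nat \<Rightarrow> nat \<Rightarrow> 'r::comm_ring_1) \<Rightarrow> nat \<Rightarrow> (nat \<Rightarrow> nat \<Rightarrow> 'r) \<Rightarrow> nat \<Rightarrow> nat \<Rightarrow> 'r" where
  "matmul A m B i k = (\<Sum>j<m. A i j * B j k)"

lemma sum_lessThan_add: "(\<Sum>j<a + (b::nat). f j) = (\<Sum>j<a. f j) + (\<Sum>j<b. f (a + j))"
  by (induct b) (auto simp: add.assoc)

lemma matvec_matmul: "matvec A m (matvec B p v) i = matvec (matmul A m B) p v i"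
  unfolding matvec_def matmul_def
  by (simp add: sum_distrib_left sum_distrib_right mult.assoc sum.swap[of _ "{..<m}"])

lemma matvec_cong: "(\<And>j. j < m \<Longrightarrow> v j = w j) \<Longrightarrow> matvec A m v i = matvec A m w i"
  unfolding matvec_def by (rule sum.cong) auto

lemma matvec_eq_0: "(\<And>j. j < m \<Longrightarrow> v j = 0) \<Longrightarrow> matvec A m v i = 0"
  unfolding matvec_def by (rule sum.neutral) auto

lemma matvec_unit: "l < m \<Longrightarrow> matvec A m (\<lambda>j. if j = l then 1 else 0) i = A i l"
  unfolding matvec_def by (simp add: if_distrib cong: if_cong)

lemma matvec_eq_sum_columns: "matvec A m w i = (\<Sum>l<m. w l * A i l)"
  unfolding matvec_def by (simp add: mult.commute)

lemma matvec_lift_columns: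
  assumes "\<forall>l<N. \<exists>c. \<forall>j<M. u l j = matvec D K c j"
  shows "\<exists>T. \<forall>w. \<forall>j<M. matvec D K (matvec T N w) j = (\<Sum>l<N. w l * u l j)"
proof -
  from assms obtain c where c: "\<forall>l<N. \<forall>j<M. u l j = matvec D K (c l) j" by metis
  have "matvec D K (matvec (\<lambda>i l. c l i) N w) j = (\<Sum>l<N. w l * u l j)" if "j < M" for w j
  proof -
    have "matvec D K (matvec (\<lambda>i l. c l i) N w) j = (\<Sum>l<N. w l * matmul D K (\<lambda>i l. c l i) j l)"
      by (simp add: matvec_matmul matvec_eq_sum_columns[of "matmul _ _ _"])
    also have "\<dots> = (\<Sum>l<N. w l * u l j)"
      by (rule sum.cong) (auto simp: matmul_def c that matvec_def)
    finally show ?thesis .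
  qed
  then show ?thesis by blast
qed

lemma matvec_lift_scalar_minus:
  assumes "\<forall>l<N. \<exists>c. \<forall>j<N. r * (if j = l then 1 else 0) - P j l = matvec D K c j"
  shows "\<exists>T. \<forall>w. \<forall>j<N. matvec D K (matvec T N w) j = r * w j - matvec P N w j"
proof -
  obtain T where T: "\<forall>w. \<forall>j<N. matvec D K (matvec T N w) j
      = (\<Sum>l<N. w l * (r * (if j = l then 1 else 0) - P j l))"
    using matvec_lift_columns[where u="\<lambda>l j. r * (if j = l then 1 else 0) - P j l"] assms
    by blast
  have eq: "(\<Sum>l<N. w l * (r * (if j = l then 1 else 0) - P j l)) = r * w j - matvec P N w j"
    if "j < N" for w j
  proof -
    have "(\<Sum>l<N. w l * (r * (if j = l then 1 else 0))) = (\<Sum>l<N. if l = j then r * w l else 0)"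
      by (rule sum.cong) auto
    also have "\<dots> = r * w j"
      using that by simp
    finally have "(\<Sum>l<N. w l * (r * (if j = l then 1 else 0))) = r * w j" .
    then show ?thesis
      by (simp add: right_diff_distrib sum_subtractf matvec_eq_sum_columns[of P])
  qed
  show ?thesis
  proof (intro exI allI impI)
    fix w j assume "j < N"
    with T eq show "matvec D K (matvec T N w) j = r * w j - matvec P N w j" by simp
  qed
qed

lemma module_mult: "module ((*) :: 'r::comm_ring_1 \<Rightarrow> 'r \<Rightarrow> 'r)"
  by unfold_locales (auto simp: algebra_simps)

lemma module_dsum_scale: "module s1 \<Longrightarrow> module s2 \<Longrightarrow> module (dsum_scale s1 s2)"
  unfolding dsum_scale_def module_def by (auto simp: prod_eq_iff)

lemma (in module) sum_scale_swap:
  "(\<Sum>j<m. c j *s (\<Sum>q<p. e j q *s x q)) = (\<Sum>q<p. (\<Sum>j<m. c j * e j q) *s x q)"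
  by (simp add: scale_sum_right scale_sum_left sum.swap[of _ "{..<m}"])

lemma (in module) sum_scale_unit:
  assumes "l < (m::nat)"
  shows "(\<Sum>j<m. (r * (if j = l then 1 else 0)) *s x j) = r *s x l"
proof -
  have "(\<Sum>j<m. (r * (if j = l then 1 else 0)) *s x j) = (\<Sum>j<m. if j = l then r *s x j else 0)"
    by (rule sum.cong) auto
  also have "\<dots> = r *s x l"
    using assms by (subst sum.delta) auto
  finally show ?thesis .
qed

lemma module_hom_lincomb:
  assumes "module_hom s1 s2 f"
  shows "f (\<Sum>j\<in>J. s1 (c j) (h j)) = (\<Sum>j\<in>J. s2 (c j) (f (h j)))"
proof -
  interpret module_hom s1 s2 f by fact
  show ?thesis by (simp add: sum scale)
qed

definition scale_factors_through_free :: "('r::comm_ring_1 \<Rightarrow> 'm::ab_group_add \<Rightarrow> 'm) \<Rightarrow> 'r \<Rightarrow> bool" where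
  "scale_factors_through_free s r \<longleftrightarrow> (\<exists>(p::nat) a h. (\<forall>j<p. module_hom s (*) (a j)) \<and>
      (\<forall>x. s r x = (\<Sum>j<p. s (a j x) (h j))))"

lemma stable_ann_iff_scale_factors_through_free:
  assumes "module s"
  shows "r \<in> stable_ann s \<longleftrightarrow> scale_factors_through_free s r"
proof
  assume "r \<in> stable_ann s"
  moreover have "module_hom s s id"
    using assms by (simp add: module_hom_iff)
  ultimately show "scale_factors_through_free s r"
    unfolding stable_ann_def scale_factors_through_free_def mem_Collect_eq
    by (metis id_apply)
next
  assume "scale_factors_through_free s r"
  then obtain p a h where a: "\<forall>j<(p::nat). module_hom s (*) (a j)"
    and fac: "\<forall>x. s r x = (\<Sum>j<p. s (a j x) (h j))"
    unfolding scale_factors_through_free_def by blast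
  show "r \<in> stable_ann s"
    unfolding stable_ann_def
  proof (intro CollectI allI impI)
    fix f assume f: "module_hom s s f"
    have "s r (f x) = (\<Sum>j<p. s (a j x) (f (h j)))" for x
    proof -
      have "s r (f x) = f (s r x)"
        using module_hom.scale[OF f] by simp
      also have "\<dots> = (\<Sum>j<p. s (a j x) (f (h j)))"
        unfolding fac[rule_format, of x] by (rule module_hom_lincomb[OF f])
      finally show ?thesis .
    qed
    with a show "\<exists>(n::nat) a h. (\<forall>j<n. module_hom s (*) (a j)) \<and>
        (\<forall>x. s r (f x) = (\<Sum>j<n. s (a j x) (h j)))"
      by (intro exI[of _ p] exI[of _ a] exI[of _ "\<lambda>j. f (h j)"]) simp
  qed
qed
lemma module_hom_dsum_fst:
  assumes "module s2" "module_hom s1 (*) a"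
  shows "module_hom (dsum_scale s1 s2) (*) (\<lambda>z. a (fst z))"
  using assms module_dsum_scale[of s1 s2]
  by (simp add: module_hom_iff dsum_scale_def)

lemma module_hom_dsum_snd:
  assumes "module s1" "module_hom s2 (*) b"
  shows "module_hom (dsum_scale s1 s2) (*) (\<lambda>z. b (snd z))"
  using assms module_dsum_scale[of s1 s2]
  by (simp add: module_hom_iff dsum_scale_def)

lemma stable_ann_dsum_scale:
  assumes m1: "module s1" and m2: "module s2"
    and r1: "r \<in> stable_ann s1" and r2: "r \<in> stable_ann s2"
  shows "r \<in> stable_ann (dsum_scale s1 s2)"
proof -
  obtain p a h where a: "\<forall>j<(p::nat). module_hom s1 (*) (a j)"
    and fa: "\<forall>x. s1 r x = (\<Sum>j<p. s1 (a j x) (h j))"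
    using r1 m1 by (auto simp: stable_ann_iff_scale_factors_through_free scale_factors_through_free_def)
  obtain q b k where b: "\<forall>j<(q::nat). module_hom s2 (*) (b j)"
    and fb: "\<forall>x. s2 r x = (\<Sum>j<q. s2 (b j x) (k j))"
    using r2 m2 by (auto simp: stable_ann_iff_scale_factors_through_free scale_factors_through_free_def)
  define A where "A j = (if j < p then (\<lambda>z. a j (fst z)) else (\<lambda>z. b (j - p) (snd z)))" for j
  define H where "H j = (if j < p then (h j, 0) else (0, k (j - p)))" for j
  have "\<forall>j<p + q. module_hom (dsum_scale s1 s2) (*) (A j)"
    using a b by (auto simp: A_def intro: module_hom_dsum_fst[OF m2] module_hom_dsum_snd[OF m1])
  moreover have "dsum_scale s1 s2 r z = (\<Sum>j<p + q. dsum_scale s1 s2 (A j z) (H j))" for z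
  proof -
    have "(\<Sum>j<p. dsum_scale s1 s2 (A j z) (H j)) = (\<Sum>j<p. (s1 (a j (fst z)) (h j), 0))"
      by (rule sum.cong) (auto simp: A_def H_def dsum_scale_def module.scale_zero_right[OF m1]
          module.scale_zero_right[OF m2])
    moreover have "(\<Sum>j<q. dsum_scale s1 s2 (A (p + j) z) (H (p + j))) = (\<Sum>j<q. (0, s2 (b j (snd z)) (k j)))"
      by (rule sum.cong) (auto simp: A_def H_def dsum_scale_def module.scale_zero_right[OF m1]
          module.scale_zero_right[OF m2])
    ultimately show ?thesis
      using fa fb by (simp add: sum_lessThan_add dsum_scale_def prod_eq_iff fst_sum snd_sum)
  qed
  ultimately have "scale_factors_through_free (dsum_scale s1 s2) r"
    unfolding scale_factors_through_free_def by (intro exI[of _ "p + q"] exI[of _ A] exI[of _ H]) blast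
  then show ?thesis
    by (simp add: stable_ann_iff_scale_factors_through_free module_dsum_scale m1 m2)
qed

lemma is_dual_via_additive: "is_dual_via s sD \<phi> \<Longrightarrow> additive (\<lambda>a. \<phi> a x)"
  unfolding is_dual_via_def additive_def by blast

lemma is_dual_via_lincomb:
  assumes "is_dual_via s sD \<phi>"
  shows "\<phi> (\<Sum>j\<in>J. sD (c j) (e j)) x = (\<Sum>j\<in>J. c j * \<phi> (e j) x)"
proof -
  have "\<phi> (\<Sum>j\<in>J. sD (c j) (e j)) x = (\<Sum>j\<in>J. \<phi> (sD (c j) (e j)) x)"
    by (rule additive.sum[OF is_dual_via_additive[OF assms]])
  then show ?thesis
    using assms by (simp add: is_dual_via_def)
qed

lemma stable_ann_dual:
  assumes mM: "module sM" and mD: "module sD" and dual: "is_dual_via sM sD \<phi>"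
    and r: "r \<in> stable_ann sM"
  shows "r \<in> stable_ann sD"
proof -
  have bij: "bij_betw \<phi> UNIV {f. module_hom sM (*) f}"
    and psc: "\<forall>r a x. \<phi> (sD r a) x = r * \<phi> a x"
    using dual unfolding is_dual_via_def by auto
  then have hom: "module_hom sM (*) (\<phi> y)" for y
    unfolding bij_betw_def by auto
  obtain p a h where a: "\<forall>j<(p::nat). module_hom sM (*) (a j)"
    and fa: "\<forall>x. sM r x = (\<Sum>j<p. sM (a j x) (h j))"
    using r mM by (auto simp: stable_ann_iff_scale_factors_through_free scale_factors_through_free_def)
  define e where "e j = inv_into UNIV \<phi> (a j)" for j
  have e: "\<phi> (e j) = a j" if "j < p" for j
    unfolding e_def using bij_betw_inv_into_right[OF bij] a that by blast
  define A where "A j y = \<phi> y (h j)" for j y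
  have "module_hom sD (*) (A j)" for j
    using mD module_mult dual unfolding module_hom_iff A_def is_dual_via_def by blast
  moreover have "sD r y = (\<Sum>j<p. sD (A j y) (e j))" for y
  proof -
    have "\<phi> (sD r y) x = \<phi> (\<Sum>j<p. sD (A j y) (e j)) x" for x
    proof -
      have "\<phi> (sD r y) x = \<phi> y (sM r x)"
        using psc module_hom.scale[OF hom[of y]] by simp
      also have "\<dots> = (\<Sum>j<p. a j x * \<phi> y (h j))"
        using fa module_hom_lincomb[OF hom[of y]] by simp
      also have "\<dots> = \<phi> (\<Sum>j<p. sD (A j y) (e j)) x"
        unfolding is_dual_via_lincomb[OF dual] A_def by (rule sum.cong) (auto simp: e mult.commute)
      finally show ?thesis .
    qed
    then have "\<phi> (sD r y) = \<phi> (\<Sum>j<p. sD (A j y) (e j))" ..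
    moreover have "inj \<phi>"
      using bij by (simp add: bij_betw_def)
    ultimately show ?thesis
      by (simp add: inj_eq)
  qed
  ultimately have "scale_factors_through_free sD r"
    unfolding scale_factors_through_free_def by (intro exI[of _ p] exI[of _ A] exI[of _ e]) blast
  then show ?thesis
    by (simp add: stable_ann_iff_scale_factors_through_free mD)
qed

section \<open>The stable annihilator kills Ext\<close>

lemma free_resolution_surj:
  "free_resolution s n d g \<Longrightarrow> \<exists>a. x = (\<Sum>j<n 0. s (a j) (g j))"
  unfolding free_resolution_def by blast

lemma free_resolution_exact_0:
  "free_resolution s n d g \<Longrightarrow>
    (\<Sum>j<n 0. s (a j) (g j)) = 0 \<longleftrightarrow> (\<exists>b. \<forall>k<n 0. a k = matvec (d 1) (n 1) b k)"
  unfolding free_resolution_def by blast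

lemma free_resolution_exact_Suc:
  assumes "free_resolution s n d g"
  shows "(\<forall>j<n k. matvec (d (Suc k)) (n (Suc k)) b j = 0) \<longleftrightarrow>
    (\<exists>c. \<forall>j<n (Suc k). b j = matvec (d (Suc (Suc k))) (n (Suc (Suc k))) c j)"
proof -
  have "\<forall>i\<ge>1. \<forall>b. (\<forall>j<n (i - 1). matvec (d i) (n i) b j = 0) \<longleftrightarrow>
      (\<exists>c. \<forall>j<n i. b j = matvec (d (i + 1)) (n (i + 1)) c j)"
    using assms unfolding free_resolution_def by blast
  from this[rule_format, of "Suc k" b] show ?thesis by simp
qed

lemma free_resolution_aug_comp:
  "free_resolution s n d g \<Longrightarrow> (\<Sum>j<n 0. s (matvec (d 1) (n 1) b j) (g j)) = 0"
  by (auto simp: free_resolution_exact_0)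

lemma free_resolution_diff_comp:
  assumes "free_resolution s n d g" "j < n k"
  shows "matvec (d (Suc k)) (n (Suc k)) (matvec (d (Suc (Suc k))) (n (Suc (Suc k))) c) j = 0"
  using free_resolution_exact_Suc[OF assms(1), where b="matvec (d (Suc (Suc k))) (n (Suc (Suc k))) c"]
    assms(2) by blast

text \<open>\<open>S : F\<^sub>k \<rightarrow> F\<^sub>k\<^sub>+\<^sub>1\<close> is the top component of a homotopy \<open>h\<close> with \<open>d h + h d = r\<close>
  on \<open>F\<^sub>1, \<dots>, F\<^sub>k\<close>; the recorded identity \<open>d S d = r d\<close> is exactly what is needed to
  extend \<open>h\<close> by one more degree.\<close>
definition partial_null_homotopy ::
  "(nat \<Rightarrow> nat) \<Rightarrow> (nat \<Rightarrow> nat \<Rightarrow> nat \<Rightarrow> 'r::comm_ring_1) \<Rightarrow> 'r \<Rightarrow> nat \<Rightarrow> (nat \<Rightarrow> nat \<Rightarrow> 'r) \<Rightarrow> bool" where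
  "partial_null_homotopy n d r k S \<longleftrightarrow> (\<forall>v. \<forall>l<n k.
      matvec (d (Suc k)) (n (Suc k)) (matvec S (n k) (matvec (d (Suc k)) (n (Suc k)) v)) l
      = r * matvec (d (Suc k)) (n (Suc k)) v l)"

lemma partial_null_homotopy_columns:
  assumes res: "free_resolution s n d g" and S: "partial_null_homotopy n d r k S"
  shows "\<forall>l<n (Suc k). \<exists>c. \<forall>j<n (Suc k). r * (if j = l then 1 else 0) - matmul S (n k) (d (Suc k)) j l
    = matvec (d (Suc (Suc k))) (n (Suc (Suc k))) c j"
proof (intro allI impI)
  fix l assume l: "l < n (Suc k)"
  define D where "D = d (Suc k)"
  define e :: "nat \<Rightarrow> 'a" where "e = (\<lambda>j. if j = l then 1 else 0)"
  have "matvec D (n (Suc k)) (\<lambda>j. r * e j - matmul S (n k) D j l) i = 0" if "i < n k" for i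
  proof -
    have "matvec D (n (Suc k)) (\<lambda>j. matmul S (n k) D j l) i
        = matvec D (n (Suc k)) (matvec S (n k) (matvec D (n (Suc k)) e)) i"
      by (rule matvec_cong) (simp add: e_def matvec_matmul matvec_unit l)
    also have "\<dots> = r * matvec D (n (Suc k)) e i"
      using S that unfolding partial_null_homotopy_def D_def by blast
    finally show ?thesis
      unfolding matvec_def by (simp add: algebra_simps sum_subtractf sum_distrib_left)
  qed
  then show "\<exists>c. \<forall>j<n (Suc k). r * (if j = l then 1 else 0) - matmul S (n k) (d (Suc k)) j l
      = matvec (d (Suc (Suc k))) (n (Suc (Suc k))) c j"
    using free_resolution_exact_Suc[OF res, where b="\<lambda>j. r * e j - matmul S (n k) D j l"]
    unfolding D_def e_def by blast
qed

lemma partial_null_homotopy_extend: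
  assumes res: "free_resolution s n d g" and S: "partial_null_homotopy n d r k S"
  shows "\<exists>T. (\<forall>w. \<forall>j<n (Suc k). matvec (d (Suc (Suc k))) (n (Suc (Suc k))) (matvec T (n (Suc k)) w) j
      = r * w j - matvec S (n k) (matvec (d (Suc k)) (n (Suc k)) w) j)
    \<and> partial_null_homotopy n d r (Suc k) T"
proof -
  define D' where "D' = d (Suc (Suc k))"
  define P where "P = matmul S (n k) (d (Suc k))"
  obtain T where T: "\<forall>w. \<forall>j<n (Suc k). matvec D' (n (Suc (Suc k))) (matvec T (n (Suc k)) w) j
      = r * w j - matvec P (n (Suc k)) w j"
    using matvec_lift_scalar_minus partial_null_homotopy_columns[OF res S] unfolding P_def D'_def by blast
  have "partial_null_homotopy n d r (Suc k) T"
    unfolding partial_null_homotopy_def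
  proof (intro allI impI)
    fix v l assume l: "l < n (Suc k)"
    have "matvec P (n (Suc k)) (matvec D' (n (Suc (Suc k))) v) l = 0"
      unfolding P_def matvec_matmul[symmetric]
      by (rule matvec_eq_0) (simp add: D'_def free_resolution_diff_comp[OF res])
    with T l show "matvec (d (Suc (Suc k))) (n (Suc (Suc k)))
        (matvec T (n (Suc k)) (matvec (d (Suc (Suc k))) (n (Suc (Suc k))) v)) l
        = r * matvec (d (Suc (Suc k))) (n (Suc (Suc k))) v l"
      unfolding D'_def by simp
  qed
  moreover have "\<forall>w. \<forall>j<n (Suc k). matvec (d (Suc (Suc k))) (n (Suc (Suc k))) (matvec T (n (Suc k)) w) j
      = r * w j - matvec S (n k) (matvec (d (Suc k)) (n (Suc k)) w) j"
    using T unfolding P_def D'_def by (simp add: matvec_matmul)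
  ultimately show ?thesis by blast
qed

text \<open>\<open>\<Phi>\<close> lifts \<open>r \<cdot> id\<^sub>M\<close> to \<open>F\<^sub>0\<close> and factors through \<open>M\<close>, which is why it kills the
  boundaries \<open>d\<^sub>1 F\<^sub>1\<close>.\<close>
lemma free_resolution_scale_lift:
  assumes ms: "module s" and res: "free_resolution s n d g"
    and r: "scale_factors_through_free s r"
  shows "\<exists>\<Phi>. (\<forall>l<n 0. (\<Sum>j<n 0. s (\<Phi> j l) (g j)) = s r (g l)) \<and>
    (\<forall>v. \<forall>l<n 0. matvec \<Phi> (n 0) (matvec (d 1) (n 1) v) l = 0)"
proof -
  interpret module s by fact
  obtain p a h where a: "\<forall>j<(p::nat). module_hom s (*) (a j)"
    and fac: "\<forall>x. s r x = (\<Sum>j<p. s (a j x) (h j))"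
    using r unfolding scale_factors_through_free_def by blast
  have "\<forall>q. \<exists>b. h q = (\<Sum>l<n 0. s (b l) (g l))"
    using free_resolution_surj[OF res] by blast
  then obtain c where c: "h q = (\<Sum>l<n 0. s (c q l) (g l))" for q
    by metis
  define \<Phi> where "\<Phi> l' l = (\<Sum>q<p. a q (g l) * c q l')" for l' l
  have "(\<Sum>j<n 0. s (\<Phi> j l) (g j)) = s r (g l)" for l
  proof -
    have "(\<Sum>j<n 0. s (\<Phi> j l) (g j)) = (\<Sum>q<p. s (a q (g l)) (\<Sum>j<n 0. s (c q j) (g j)))"
      unfolding \<Phi>_def using sum_scale_swap[where m=p and c="\<lambda>q. a q (g l)" and e=c and x=g]
      by (simp add: mult.commute)
    then show ?thesis
      using fac c by simp
  qed
  moreover have "matvec \<Phi> (n 0) (matvec (d 1) (n 1) v) l = 0" for v l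
  proof -
    define x where "x = matvec (d 1) (n 1) v"
    have "matvec \<Phi> (n 0) x l = (\<Sum>q<p. c q l * (\<Sum>j<n 0. x j * a q (g j)))"
      unfolding matvec_def \<Phi>_def
      by (simp add: sum_distrib_left sum_distrib_right sum.swap[of _ "{..<n 0}"] algebra_simps)
    also have "\<dots> = (\<Sum>q<p. c q l * a q (\<Sum>j<n 0. s (x j) (g j)))"
    proof (rule sum.cong)
      fix q assume "q \<in> {..<p}"
      with a have "module_hom s (*) (a q)" by simp
      then show "c q l * (\<Sum>j<n 0. x j * a q (g j))
          = c q l * a q (\<Sum>j<n 0. s (x j) (g j))" by (simp add: module_hom_lincomb)
    qed simp
    also have "\<dots> = 0"
    proof (rule sum.neutral, rule ballI)
      fix q assume "q \<in> {..<p}"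
      with a have "module_hom s (*) (a q)" by simp
      then show "c q l * a q (\<Sum>j<n 0. s (x j) (g j)) = 0"
        using free_resolution_aug_comp[OF res] unfolding x_def by (simp add: module_hom.zero)
    qed
    finally show ?thesis unfolding x_def .
  qed
  ultimately show ?thesis by blast
qed

lemma partial_null_homotopy_0:
  assumes ms: "module s" and res: "free_resolution s n d g"
    and r: "scale_factors_through_free s r"
  shows "\<exists>S. partial_null_homotopy n d r 0 S"
proof -
  interpret module s by fact
  obtain \<Phi> where lift: "\<forall>l<n 0. (\<Sum>j<n 0. s (\<Phi> j l) (g j)) = s r (g l)"
    and kill: "\<forall>v. \<forall>l<n 0. matvec \<Phi> (n 0) (matvec (d 1) (n 1) v) l = 0"
    using free_resolution_scale_lift[OF assms] by blast
  have "\<forall>l<n 0. \<exists>b. \<forall>j<n 0. r * (if j = l then 1 else 0) - \<Phi> j l = matvec (d 1) (n 1) b j"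
  proof (intro allI impI)
    fix l assume l: "l < n 0"
    from l lift have "(\<Sum>j<n 0. s (r * (if j = l then 1 else 0) - \<Phi> j l) (g j)) = 0"
      by (simp add: scale_left_diff_distrib sum_subtractf sum_scale_unit)
    then show "\<exists>b. \<forall>j<n 0. r * (if j = l then 1 else 0) - \<Phi> j l = matvec (d 1) (n 1) b j"
      using free_resolution_exact_0[OF res, where a="\<lambda>j. r * (if j = l then 1 else 0) - \<Phi> j l"]
      by blast
  qed
  then obtain S where S: "\<forall>w. \<forall>j<n 0. matvec (d 1) (n 1) (matvec S (n 0) w) j = r * w j - matvec \<Phi> (n 0) w j"
    using matvec_lift_scalar_minus by blast
  have "partial_null_homotopy n d r 0 S"
    unfolding partial_null_homotopy_def using S kill by simp
  then show ?thesis by blast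
qed

lemma partial_null_homotopy_exists:
  assumes "module s" "free_resolution s n d g" "r \<in> stable_ann s"
  shows "\<exists>S. partial_null_homotopy n d r k S"
proof (induct k)
  case 0
  show ?case
    using partial_null_homotopy_0 assms stable_ann_iff_scale_factors_through_free by blast
next
  case (Suc k)
  then show ?case
    using partial_null_homotopy_extend[OF assms(2)] by blast
qed

lemma scale_null_homotopic:
  assumes "module s" "free_resolution s n d g" "r \<in> stable_ann s"
  shows "\<exists>S T. \<forall>q<n (Suc k). \<forall>q'<n (Suc k).
    matmul S (n k) (d (Suc k)) q' q + matmul (d (Suc (Suc k))) (n (Suc (Suc k))) T q' q
      = r * (if q' = q then 1 else 0)"
proof -
  obtain S where "partial_null_homotopy n d r k S"
    using partial_null_homotopy_exists[OF assms] by blast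
  then obtain T where T: "\<forall>w. \<forall>j<n (Suc k).
      matvec (d (Suc (Suc k))) (n (Suc (Suc k))) (matvec T (n (Suc k)) w) j
      = r * w j - matvec S (n k) (matvec (d (Suc k)) (n (Suc k)) w) j"
    using partial_null_homotopy_extend[OF assms(2)] by blast
  have "matmul S (n k) (d (Suc k)) q' q + matmul (d (Suc (Suc k))) (n (Suc (Suc k))) T q' q
      = r * (if q' = q then 1 else 0)" if "q < n (Suc k)" "q' < n (Suc k)" for q q'
    using T[rule_format, where w="\<lambda>j. if j = q then 1 else 0" and j=q'] that
    by (simp add: matvec_matmul matvec_unit)
  then show ?thesis by blast
qed

lemma ann_Ext_res_of_null_homotopy:
  assumes mt: "module t"
    and ST: "\<forall>q<n (Suc k). \<forall>q'<n (Suc k).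
      matmul S (n k) (d (Suc k)) q' q + matmul (d (Suc (Suc k))) (n (Suc (Suc k))) T q' q
        = r * (if q' = q then 1 else 0)"
  shows "r \<in> ann_Ext_res (Suc k) n d t"
  unfolding ann_Ext_res_def mem_Collect_eq
proof (intro allI impI)
  interpret module t by fact
  fix x
  assume cocycle: "\<forall>l<n (Suc k + 1). (\<Sum>q<n (Suc k). t (d (Suc k + 1) q l) (x q)) = 0"
  define y where "y j = (\<Sum>q<n (Suc k). t (S q j) (x q))" for j
  have "t r (x q) = (\<Sum>j<n k. t (d (Suc k) j q) (y j))" if q: "q < n (Suc k)" for q
  proof -
    have "(\<Sum>j<n k. t (d (Suc k) j q) (y j)) = (\<Sum>q'<n (Suc k). t (matmul S (n k) (d (Suc k)) q' q) (x q'))"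
      unfolding y_def matmul_def
      using sum_scale_swap[where m="n k" and c="\<lambda>j. d (Suc k) j q" and e="\<lambda>j q. S q j" and x=x]
      by (simp add: mult.commute)
    also have "\<dots> = (\<Sum>q'<n (Suc k). t (r * (if q' = q then 1 else 0)) (x q'))
        - (\<Sum>q'<n (Suc k). t (matmul (d (Suc (Suc k))) (n (Suc (Suc k))) T q' q) (x q'))"
      using ST q by (simp add: eq_diff_eq[symmetric] scale_left_diff_distrib sum_subtractf)
    also have "(\<Sum>q'<n (Suc k). t (r * (if q' = q then 1 else 0)) (x q')) = t r (x q)"
      using q by (rule sum_scale_unit)
    also have "(\<Sum>q'<n (Suc k). t (matmul (d (Suc (Suc k))) (n (Suc (Suc k))) T q' q) (x q'))
        = (\<Sum>l<n (Suc (Suc k)). t (T l q) (\<Sum>q'<n (Suc k). t (d (Suc (Suc k)) q' l) (x q')))"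
      unfolding matmul_def
      using sum_scale_swap[where m="n (Suc (Suc k))" and c="\<lambda>l. T l q" and e="\<lambda>l q'. d (Suc (Suc k)) q' l" and x=x]
      by (simp add: mult.commute)
    also have "\<dots> = 0"
      using cocycle by simp
    finally show ?thesis by simp
  qed
  then show "\<exists>y. \<forall>q<n (Suc k). t r (x q) = (\<Sum>j<n (Suc k - 1). t (d (Suc k) j q) (y j))"
    by auto
qed

lemma stable_ann_subset_ann_Ext:
  assumes "module s" "module t" "0 < i"
  shows "stable_ann s \<subseteq> ann_Ext i s t"
proof
  fix r assume r: "r \<in> stable_ann s"
  obtain k where i: "i = Suc k"
    using assms(3) gr0_implies_Suc by blast
  show "r \<in> ann_Ext i s t"
    unfolding ann_Ext_def i
    using scale_null_homotopic[OF assms(1) _ r] ann_Ext_res_of_null_homotopy[OF assms(2)] by blast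
qed

section \<open>Resolutions of direct sums\<close>

definition diag_block ::
  "(nat \<Rightarrow> nat) \<Rightarrow> (nat \<Rightarrow> nat) \<Rightarrow> (nat \<Rightarrow> nat \<Rightarrow> nat \<Rightarrow> 'r::comm_ring_1) \<Rightarrow> (nat \<Rightarrow> nat \<Rightarrow> nat \<Rightarrow> 'r)
    \<Rightarrow> nat \<Rightarrow> nat \<Rightarrow> nat \<Rightarrow> 'r" where
  "diag_block n n' d d' i k j =
    (if k < n (i - 1) then (if j < n i then d i k j else 0)
     else (if j < n i then 0 else d' i (k - n (i - 1)) (j - n i)))"

definition gens_dsum :: "(nat \<Rightarrow> nat) \<Rightarrow> (nat \<Rightarrow> 'm::ab_group_add) \<Rightarrow> (nat \<Rightarrow> 'n::ab_group_add) \<Rightarrow> nat \<Rightarrow> 'm \<times> 'n" where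
  "gens_dsum n g g' j = (if j < n 0 then (g j, 0) else (0, g' (j - n 0)))"

lemma matvec_diag_block_fst:
  "k < n (i - 1) \<Longrightarrow> matvec (diag_block n n' d d' i) (n i + n' i) b k = matvec (d i) (n i) b k"
  unfolding matvec_def sum_lessThan_add by (simp add: diag_block_def)

lemma matvec_diag_block_snd:
  "matvec (diag_block n n' d d' i) (n i + n' i) b (n (i - 1) + k) = matvec (d' i) (n' i) (\<lambda>j. b (n i + j)) k"
  unfolding matvec_def sum_lessThan_add by (simp add: diag_block_def)

lemma all_lessThan_add:
  "(\<forall>k<a + (b::nat). P k) \<longleftrightarrow> (\<forall>k<a. P k) \<and> (\<forall>k<b. P (a + k))"
  by (metis add_less_cancel_left less_diff_conv2 linorder_not_less trans_less_add1 le_add_diff_inverse)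

lemma diag_block_kernel_iff:
  "(\<forall>k<n (i - 1) + n' (i - 1). matvec (diag_block n n' d d' i) (n i + n' i) b k = 0) \<longleftrightarrow>
   (\<forall>k<n (i - 1). matvec (d i) (n i) b k = 0) \<and> (\<forall>k<n' (i - 1). matvec (d' i) (n' i) (\<lambda>j. b (n i + j)) k = 0)"
  unfolding all_lessThan_add matvec_diag_block_snd by (simp add: matvec_diag_block_fst)

lemma diag_block_image_iff:
  "(\<exists>b. \<forall>k<n (i - 1) + n' (i - 1). a k = matvec (diag_block n n' d d' i) (n i + n' i) b k) \<longleftrightarrow>
   (\<exists>b. \<forall>k<n (i - 1). a k = matvec (d i) (n i) b k) \<and>
   (\<exists>b. \<forall>k<n' (i - 1). a (n (i - 1) + k) = matvec (d' i) (n' i) b k)"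
  (is "?block \<longleftrightarrow> ?fst \<and> ?snd")
proof
  assume ?block
  then show "?fst \<and> ?snd"
    unfolding all_lessThan_add matvec_diag_block_snd by (auto simp: matvec_diag_block_fst)
next
  assume "?fst \<and> ?snd"
  then obtain b1 b2 where b1: "\<forall>k<n (i - 1). a k = matvec (d i) (n i) b1 k"
    and b2: "\<forall>k<n' (i - 1). a (n (i - 1) + k) = matvec (d' i) (n' i) b2 k"
    by blast
  define b where "b j = (if j < n i then b1 j else b2 (j - n i))" for j
  have "matvec (d i) (n i) b k = matvec (d i) (n i) b1 k" for k
    by (rule matvec_cong) (simp add: b_def)
  moreover have "(\<lambda>j. b (n i + j)) = b2"
    by (simp add: b_def)
  ultimately show ?block
    using b1 b2 unfolding all_lessThan_add matvec_diag_block_snd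
    by (intro exI[of _ b]) (simp add: matvec_diag_block_fst)
qed

lemma gens_dsum_lincomb:
  assumes "module s1" "module s2"
  shows "(\<Sum>j<n 0 + n' 0. dsum_scale s1 s2 (a j) (gens_dsum n g g' j)) =
    (\<Sum>j<n 0. s1 (a j) (g j), \<Sum>j<n' 0. s2 (a (n 0 + j)) (g' j))"
proof -
  have "(\<Sum>j<n 0. dsum_scale s1 s2 (a j) (gens_dsum n g g' j)) = (\<Sum>j<n 0. (s1 (a j) (g j), 0))"
    using assms by (intro sum.cong) (auto simp: gens_dsum_def dsum_scale_def module.scale_zero_right)
  moreover have "(\<Sum>j<n' 0. dsum_scale s1 s2 (a (n 0 + j)) (gens_dsum n g g' (n 0 + j)))
      = (\<Sum>j<n' 0. (0, s2 (a (n 0 + j)) (g' j)))"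
    using assms by (intro sum.cong) (auto simp: gens_dsum_def dsum_scale_def module.scale_zero_right)
  ultimately show ?thesis
    unfolding sum_lessThan_add by (simp add: prod_eq_iff fst_sum snd_sum)
qed

lemma free_resolution_dsum_scale:
  assumes m1: "module s1" and m2: "module s2"
    and res1: "free_resolution s1 n d g" and res2: "free_resolution s2 n' d' g'"
  shows "free_resolution (dsum_scale s1 s2) (\<lambda>i. n i + n' i) (diag_block n n' d d') (gens_dsum n g g')"
  unfolding free_resolution_def
proof (intro conjI allI impI)
  fix x :: "'b \<times> 'c"
  obtain a1 where a1: "fst x = (\<Sum>j<n 0. s1 (a1 j) (g j))"
    using free_resolution_surj[OF res1] by blast
  obtain a2 where a2: "snd x = (\<Sum>j<n' 0. s2 (a2 j) (g' j))"
    using free_resolution_surj[OF res2] by blast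
  define a where "a j = (if j < n 0 then a1 j else a2 (j - n 0))" for j
  have "x = (\<Sum>j<n 0 + n' 0. dsum_scale s1 s2 (a j) (gens_dsum n g g' j))"
    unfolding gens_dsum_lincomb[OF m1 m2] using a1 a2 by (simp add: a_def prod_eq_iff)
  then show "\<exists>a. x = (\<Sum>j<n 0 + n' 0. dsum_scale s1 s2 (a j) (gens_dsum n g g' j))" by blast
next
  fix a
  show "(\<Sum>j<n 0 + n' 0. dsum_scale s1 s2 (a j) (gens_dsum n g g' j)) = 0 \<longleftrightarrow>
      (\<exists>b. \<forall>k<n 0 + n' 0. a k = matvec (diag_block n n' d d' 1) (n 1 + n' 1) b k)"
    using diag_block_image_iff[where a=a and n=n and n'=n' and d=d and d'=d' and i=1]
      free_resolution_exact_0[OF res1, where a=a]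
      free_resolution_exact_0[OF res2, where a="\<lambda>j. a (n 0 + j)"]
    unfolding gens_dsum_lincomb[OF m1 m2] by (simp add: zero_prod_def)
next
  fix i :: nat and b assume "1 \<le> i"
  then obtain k where i: "i = Suc k"
    by (cases i) auto
  show "(\<forall>j<n (i - 1) + n' (i - 1). matvec (diag_block n n' d d' i) (n i + n' i) b j = 0) \<longleftrightarrow>
      (\<exists>c. \<forall>j<n i + n' i. b j = matvec (diag_block n n' d d' (i + 1)) (n (i + 1) + n' (i + 1)) c j)"
    using diag_block_image_iff[where a=b and n=n and n'=n' and d=d and d'=d' and i="Suc i"]
      free_resolution_exact_Suc[OF res1, where k=k and b=b]
      free_resolution_exact_Suc[OF res2, where k=k and b="\<lambda>j. b (n (Suc k) + j)"]
    unfolding diag_block_kernel_iff i by simp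
qed

lemma diag_block_cocycle_extend:
  assumes hom: "module_hom t t' \<iota>"
    and cocycle: "\<forall>l<n (i + 1). (\<Sum>k<n i. t (d (i + 1) k l) (x k)) = 0"
  shows "\<forall>l<n (i + 1) + n' (i + 1). (\<Sum>k<n i + n' i.
    t' (diag_block n n' d d' (i + 1) k l) (if k < n i then \<iota> (x k) else 0)) = 0"
proof (intro allI impI)
  interpret module_hom t t' \<iota> by fact
  fix l
  have "(\<Sum>k<n i. t (diag_block n n' d d' (i + 1) k l) (x k)) = 0"
  proof (cases "l < n (i + 1)")
    case True
    then have "(\<Sum>k<n i. t (diag_block n n' d d' (i + 1) k l) (x k)) = (\<Sum>k<n i. t (d (i + 1) k l) (x k))"
      by (intro sum.cong) (auto simp: diag_block_def)
    with True cocycle show ?thesis by simp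
  next
    case False
    then show ?thesis
      by (intro sum.neutral) (auto simp: diag_block_def)
  qed
  then have "(\<Sum>k<n i. t' (diag_block n n' d d' (i + 1) k l) (\<iota> (x k))) = 0"
    using module_hom_lincomb[OF hom, of "\<lambda>k. diag_block n n' d d' (i + 1) k l" x "{..<n i}"] by simp
  then show "(\<Sum>k<n i + n' i. t' (diag_block n n' d d' (i + 1) k l) (if k < n i then \<iota> (x k) else 0)) = 0"
    unfolding sum_lessThan_add by simp
qed

text \<open>Ext into a retract of the coefficient module: a cocycle \<open>x\<close> is pushed along \<open>\<iota>\<close> into
  the resolution of the direct sum, and the resulting coboundary is pulled back along \<open>\<pi>\<close>.\<close>
lemma ann_Ext_res_retract:
  assumes hi: "module_hom t t' \<iota>" and hp: "module_hom t' t \<pi>" and retract: "\<forall>z. \<pi> (\<iota> z) = z"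
    and r: "r \<in> ann_Ext_res i (\<lambda>i. n i + n' i) (diag_block n n' d d') t'"
  shows "r \<in> ann_Ext_res i n d t"
  unfolding ann_Ext_res_def mem_Collect_eq
proof (intro allI impI)
  fix x
  assume cocycle: "\<forall>l<n (i + 1). (\<Sum>k<n i. t (d (i + 1) k l) (x k)) = 0"
  define x' where "x' k = (if k < n i then \<iota> (x k) else 0)" for k
  from diag_block_cocycle_extend[where n=n and d=d and i=i and n'=n' and d'=d', OF hi cocycle]
  have "\<forall>l<n (i + 1) + n' (i + 1). (\<Sum>k<n i + n' i. t' (diag_block n n' d d' (i + 1) k l) (x' k)) = 0"
    unfolding x'_def .
  from mp[OF spec[OF r[unfolded ann_Ext_res_def mem_Collect_eq], of x'] this]
  obtain y where y: "\<forall>k<n i + n' i.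
      t' r (x' k) = (\<Sum>j<n (i - 1) + n' (i - 1). t' (diag_block n n' d d' i j k) (y j))"
    by blast
  have "t r (x k) = (\<Sum>j<n (i - 1). t (d i j k) (\<pi> (y j)))" if k: "k < n i" for k
  proof -
    have "t r (x k) = \<pi> (t' r (\<iota> (x k)))"
      using retract module_hom.scale[OF hi] module_hom.scale[OF hp] by simp
    also have "\<dots> = \<pi> (\<Sum>j<n (i - 1) + n' (i - 1). t' (diag_block n n' d d' i j k) (y j))"
      using y[rule_format, of k] k by (simp add: x'_def)
    also have "\<dots> = (\<Sum>j<n (i - 1) + n' (i - 1). t (diag_block n n' d d' i j k) (\<pi> (y j)))"
      by (rule module_hom_lincomb[OF hp])
    also have "\<dots> = (\<Sum>j<n (i - 1). t (d i j k) (\<pi> (y j)))"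
      unfolding sum_lessThan_add using k module.scale_zero_left[OF module_hom.axioms(2)[OF hp]]
      by (simp add: diag_block_def)
    finally show ?thesis .
  qed
  then show "\<exists>y. \<forall>k<n i. t r (x k) = (\<Sum>j<n (i - 1). t (d i j k) (y j))"
    by (intro exI[of _ "\<lambda>j. \<pi> (y j)"] allI impI)
qed

lemma ann_Ext_dsum_scale_subset:
  assumes m1: "module s1" and m2: "module s2"
    and hi: "module_hom t t' \<iota>" and hp: "module_hom t' t \<pi>" and retract: "\<forall>z. \<pi> (\<iota> z) = z"
    and res2: "free_resolution s2 n' d' g'"
  shows "ann_Ext i (dsum_scale s1 s2) t' \<subseteq> ann_Ext i s1 t"
proof
  fix r assume r: "r \<in> ann_Ext i (dsum_scale s1 s2) t'"
  have "r \<in> ann_Ext_res i n d t" if res1: "free_resolution s1 n d g" for n d g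
  proof (rule ann_Ext_res_retract[OF hi hp retract])
    show "r \<in> ann_Ext_res i (\<lambda>i. n i + n' i) (diag_block n n' d d') t'"
      using r free_resolution_dsum_scale[OF m1 m2 res1 res2] unfolding ann_Ext_def by blast
  qed
  then show "r \<in> ann_Ext i s1 t"
    unfolding ann_Ext_def by blast
qed

section \<open>Finitely generated modules over a Noetherian ring have free resolutions\<close>

definition vec_submodule :: "(nat \<Rightarrow> 'r::comm_ring_1) set \<Rightarrow> bool" where
  "vec_submodule V \<longleftrightarrow> (\<lambda>_. 0) \<in> V \<and> (\<forall>a\<in>V. \<forall>b\<in>V. (\<lambda>i. a i + b i) \<in> V) \<and>
    (\<forall>c. \<forall>a\<in>V. (\<lambda>i. c * a i) \<in> V)"

text \<open>Only the first \<open>k\<close> coordinates count: the columns of \<open>c\<close> lie in \<open>V\<close> and generate it.\<close>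
definition columns_generate :: "nat \<Rightarrow> (nat \<Rightarrow> 'r::comm_ring_1) set \<Rightarrow> nat \<Rightarrow> (nat \<Rightarrow> nat \<Rightarrow> 'r) \<Rightarrow> bool" where
  "columns_generate k V m c \<longleftrightarrow>
    (\<forall>a\<in>V. \<exists>b. \<forall>i<k. a i = matvec c m b i) \<and> (\<forall>j<m. \<exists>a\<in>V. \<forall>i<k. c i j = a i)"

lemma vec_submodule_lincomb:
  assumes V: "vec_submodule V" and w: "\<forall>q<p. w q \<in> V"
  shows "(\<lambda>i. \<Sum>q<(p::nat). b q * w q i) \<in> V"
  using w
proof (induct p)
  case 0
  then show ?case using V by (simp add: vec_submodule_def)
next
  case (Suc p)
  then have "(\<lambda>i. \<Sum>q<p. b q * w q i) \<in> V" "(\<lambda>i. b p * w p i) \<in> V"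
    using V by (auto simp: vec_submodule_def)
  then show ?case using V by (simp add: vec_submodule_def)
qed

lemma vec_submodule_diff:
  assumes V: "vec_submodule V" and "a \<in> V" "b \<in> V"
  shows "(\<lambda>i. a i - b i) \<in> V"
proof -
  have "(\<lambda>i. (-1) * b i) \<in> V"
    using V assms(3) unfolding vec_submodule_def by blast
  moreover have "\<forall>x\<in>V. \<forall>y\<in>V. (\<lambda>i. x i + y i) \<in> V"
    using V unfolding vec_submodule_def by blast
  ultimately show ?thesis
    using assms(2) by force
qed

lemma noetherian_ideal_generators:
  assumes "noetherian_ring TYPE('r::comm_ring_1)" "is_ideal (I :: 'r set)"
  shows "\<exists>p e. (\<forall>q<(p::nat). e q \<in> I) \<and> (\<forall>z\<in>I. \<exists>\<beta>. z = (\<Sum>q<p. \<beta> q * e q))"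
proof -
  obtain S where S: "finite S" "I = module.span (*) S"
    using assms unfolding noetherian_ring_def by blast
  obtain p :: nat and e where e: "S = e ` {..<p}" "inj_on e {..<p}"
    using finite_imp_nat_seg_image_inj_on[OF S(1)] by (auto simp: lessThan_def)
  have "\<exists>\<beta>. z = (\<Sum>q<p. \<beta> q * e q)" if "z \<in> I" for z
  proof -
    from that S(2) module.span_finite[OF module_mult S(1)]
    obtain u where "z = (\<Sum>v\<in>S. u v * v)"
      by auto
    then have "z = (\<Sum>q<p. u (e q) * e q)"
      using e by (simp add: sum.reindex)
    then show ?thesis by (rule exI[of _ "\<lambda>q. u (e q)"])
  qed
  moreover have "\<forall>q<p. e q \<in> I"
    using S e by (auto intro!: module.span_base[OF module_mult])
  ultimately show ?thesis by blast
qed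

lemma vec_submodule_coordinate_generators:
  assumes noeth: "noetherian_ring TYPE('r::comm_ring_1)" and V: "vec_submodule (V :: (nat \<Rightarrow> 'r) set)"
  shows "\<exists>p w. (\<forall>q<(p::nat). w q \<in> V) \<and> (\<forall>a\<in>V. \<exists>\<beta>. a k = (\<Sum>q<p. \<beta> q * w q k))"
proof -
  have "is_ideal ((\<lambda>a. a k) ` V)"
    using V unfolding is_ideal_def vec_submodule_def by (auto simp: image_iff)
  then obtain p :: nat and e where e: "\<forall>q<p. e q \<in> (\<lambda>a. a k) ` V"
    and gen: "\<forall>z\<in>(\<lambda>a. a k) ` V. \<exists>\<beta>. z = (\<Sum>q<p. \<beta> q * e q)"
    using noetherian_ideal_generators[OF noeth] by blast
  have "\<forall>q. \<exists>w. q < p \<longrightarrow> w \<in> V \<and> w k = e q"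
    using e by (metis imageE)
  then obtain w where w: "\<forall>q<p. w q \<in> V \<and> w q k = e q"
    by metis
  then have "\<forall>a\<in>V. \<exists>\<beta>. a k = (\<Sum>q<p. \<beta> q * w q k)"
    using gen by simp
  with w show ?thesis by blast
qed

text \<open>Generators in \<open>k + 1\<close> coordinates: those of the vectors with vanishing \<open>k\<close>-th
  coordinate, followed by vectors whose \<open>k\<close>-th coordinates generate the ideal of all \<open>k\<close>-th
  coordinates.\<close>
lemma columns_generate_Suc:
  assumes V: "vec_submodule V"
    and g': "columns_generate k {a \<in> V. a k = 0} m' c'"
    and w: "\<forall>q<p. w q \<in> V" and wk: "\<forall>a\<in>V. \<exists>\<beta>. a k = (\<Sum>q<p. \<beta> q * w q k)"
  shows "\<exists>c. columns_generate (Suc k) V (m' + p) c"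
proof -
  define c where "c i j = (if j < m' then (if i = k then 0 else c' i j) else w (j - m') i)" for i j
  have "\<exists>b. \<forall>i<Suc k. a i = matvec c (m' + p) b i" if a: "a \<in> V" for a
  proof -
    obtain \<beta> where \<beta>: "a k = (\<Sum>q<p. \<beta> q * w q k)"
      using wk a by blast
    define a' where "a' i = a i - (\<Sum>q<p. \<beta> q * w q i)" for i
    have "a' \<in> {a \<in> V. a k = 0}"
      unfolding a'_def using \<beta> vec_submodule_diff[OF V a vec_submodule_lincomb[OF V w]]
      by (simp add: a'_def[abs_def])
    then obtain b' where b': "\<forall>i<k. a' i = matvec c' m' b' i"
      using g' unfolding columns_generate_def by blast
    define b where "b j = (if j < m' then b' j else \<beta> (j - m'))" for j
    have mv: "matvec c (m' + p) b i = (\<Sum>j<m'. c i j * b' j) + (\<Sum>q<p. w q i * \<beta> q)" for i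
      unfolding matvec_def sum_lessThan_add by (simp add: c_def b_def)
    have "a i = matvec c (m' + p) b i" if "i < Suc k" for i
    proof (cases "i = k")
      case True
      then show ?thesis unfolding mv using \<beta> by (simp add: c_def mult.commute)
    next
      case False
      with that have "(\<Sum>j<m'. c i j * b' j) = a' i"
        using b' by (simp add: c_def matvec_def)
      then show ?thesis unfolding mv a'_def by (simp add: mult.commute)
    qed
    then show ?thesis by blast
  qed
  moreover have "\<exists>a\<in>V. \<forall>i<Suc k. c i j = a i" if j: "j < m' + p" for j
  proof (cases "j < m'")
    case True
    then obtain a where "a \<in> {a \<in> V. a k = 0}" "\<forall>i<k. c' i j = a i"
      using g' unfolding columns_generate_def by blast
    with True show ?thesis
      unfolding c_def by (intro bexI[of _ a]) (auto simp: less_Suc_eq)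
  next
    case False
    with j w show ?thesis
      unfolding c_def by (intro bexI[of _ "w (j - m')"]) auto
  qed
  ultimately have "columns_generate (Suc k) V (m' + p) c"
    unfolding columns_generate_def by blast
  then show ?thesis by blast
qed

lemma noetherian_columns_generate:
  fixes V :: "(nat \<Rightarrow> 'r::comm_ring_1) set"
  assumes noeth: "noetherian_ring TYPE('r)" and "vec_submodule V"
  shows "\<exists>m c. columns_generate k V m c"
  using assms(2)
proof (induct k arbitrary: V)
  case 0
  then show ?case
    unfolding columns_generate_def by (intro exI[of _ 0]) auto
next
  case (Suc k)
  note V = \<open>vec_submodule V\<close>
  have "vec_submodule {a \<in> V. a k = 0}"
    using V unfolding vec_submodule_def by auto
  then obtain m' c' where "columns_generate k {a \<in> V. a k = 0} m' c'"
    using Suc.hyps by blast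
  moreover obtain p :: nat and w where "\<forall>q<p. w q \<in> V" "\<forall>a\<in>V. \<exists>\<beta>. a k = (\<Sum>q<p. \<beta> q * w q k)"
    using vec_submodule_coordinate_generators[OF noeth V] by blast
  ultimately show ?case
    using columns_generate_Suc[OF V] by blast
qed

lemma columns_generate_iff:
  assumes V: "vec_submodule V" and cong: "\<And>a a'. a \<in> V \<Longrightarrow> (\<forall>i<k. a i = a' i) \<Longrightarrow> a' \<in> V"
    and g: "columns_generate k V m c"
  shows "a \<in> V \<longleftrightarrow> (\<exists>b. \<forall>i<k. a i = matvec c m b i)"
proof
  assume "a \<in> V"
  then show "\<exists>b. \<forall>i<k. a i = matvec c m b i"
    using g unfolding columns_generate_def by blast
next
  assume "\<exists>b. \<forall>i<k. a i = matvec c m b i"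
  then obtain b where b: "\<forall>i<k. a i = matvec c m b i" by blast
  have "\<forall>j. \<exists>v. j < m \<longrightarrow> v \<in> V \<and> (\<forall>i<k. c i j = v i)"
    using g unfolding columns_generate_def by blast
  then obtain v where v: "\<forall>j<m. v j \<in> V \<and> (\<forall>i<k. c i j = v j i)"
    by metis
  then have "(\<lambda>i. \<Sum>j<m. b j * v j i) \<in> V"
    using vec_submodule_lincomb[OF V] by blast
  moreover have "\<forall>i<k. (\<Sum>j<m. b j * v j i) = a i"
    using b v by (simp add: matvec_def mult.commute)
  ultimately show "a \<in> V"
    using cong by blast
qed

definition matrix_kernel :: "nat \<Rightarrow> nat \<Rightarrow> (nat \<Rightarrow> nat \<Rightarrow> 'r::comm_ring_1) \<Rightarrow> (nat \<Rightarrow> 'r) set" where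
  "matrix_kernel rows cols A = {b. \<forall>k<rows. matvec A cols b k = 0}"

lemma vec_submodule_matrix_kernel: "vec_submodule (matrix_kernel rows cols A)"
proof -
  have "matvec A cols (\<lambda>i. a i + b i) k = matvec A cols a k + matvec A cols b k" for a b k
    by (simp add: matvec_def distrib_left sum.distrib)
  moreover have "matvec A cols (\<lambda>i. c * a i) k = c * matvec A cols a k" for c a k
    by (simp add: matvec_def sum_distrib_left mult.left_commute)
  ultimately show ?thesis
    unfolding vec_submodule_def matrix_kernel_def by (simp add: matvec_def)
qed

lemma matrix_kernel_cong:
  "a \<in> matrix_kernel rows cols A \<Longrightarrow> \<forall>i<cols. a i = a' i \<Longrightarrow> a' \<in> matrix_kernel rows cols A"
  unfolding matrix_kernel_def using matvec_cong[of cols a a' A] by simp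

lemma fin_gen_generators:
  assumes "fin_gen s"
  shows "\<exists>(m::nat) g. \<forall>x. \<exists>a. x = (\<Sum>j<m. s (a j) (g j))"
proof -
  from assms obtain S where ms: "module s" and S: "finite S" "module.span s S = UNIV"
    unfolding fin_gen_def by blast
  obtain m :: nat and g where g: "S = g ` {..<m}" "inj_on g {..<m}"
    using finite_imp_nat_seg_image_inj_on[OF S(1)] by (auto simp: lessThan_def)
  have "\<exists>a. x = (\<Sum>j<m. s (a j) (g j))" for x
  proof -
    obtain u where "x = (\<Sum>v\<in>S. s (u v) v)"
      using module.span_finite[OF ms S(1)] S(2) by auto
    then have "x = (\<Sum>j<m. s (u (g j)) (g j))"
      using g by (simp add: sum.reindex)
    then show ?thesis by (rule exI[of _ "\<lambda>j. u (g j)"])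
  qed
  then show ?thesis by blast
qed

lemma noetherian_kernel_chain:
  fixes c1 :: "nat \<Rightarrow> nat \<Rightarrow> 'r::comm_ring_1"
  assumes noeth: "noetherian_ring TYPE('r)"
  shows "\<exists>n d. n 0 = n0 \<and> n 1 = m1 \<and> d 1 = c1 \<and> (\<forall>j. columns_generate (n (Suc j))
    (matrix_kernel (n j) (n (Suc j)) (d (Suc j))) (n (Suc (Suc j))) (d (Suc (Suc j))))"
proof -
  define P where "P i x \<longleftrightarrow> (i = 0 \<longrightarrow> x = (n0, m1, c1))" for i :: nat and x :: "nat \<times> nat \<times> (nat \<Rightarrow> nat \<Rightarrow> 'r)"
  define Q where "Q x y \<longleftrightarrow> fst y = fst (snd x) \<and> columns_generate (fst (snd x))
      (matrix_kernel (fst x) (fst (snd x)) (snd (snd x))) (fst (snd y)) (snd (snd y))"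
    for x y :: "nat \<times> nat \<times> (nat \<Rightarrow> nat \<Rightarrow> 'r)"
  have "\<exists>f. \<forall>i. P i (f i) \<and> Q (f i) (f (Suc i))"
  proof (rule dependent_nat_choice)
    show "\<exists>x. P 0 x"
      unfolding P_def by simp
  next
    fix x :: "nat \<times> nat \<times> (nat \<Rightarrow> nat \<Rightarrow> 'r)" and i :: nat
    obtain m c where "columns_generate (fst (snd x)) (matrix_kernel (fst x) (fst (snd x)) (snd (snd x))) m c"
      using noetherian_columns_generate[OF noeth vec_submodule_matrix_kernel] by blast
    then show "\<exists>y. P (Suc i) y \<and> Q x y"
      unfolding P_def Q_def by (intro exI[of _ "(fst (snd x), m, c)"]) simp
  qed
  then obtain f where P: "\<And>i. P i (f i)" and Q: "\<And>i. Q (f i) (f (Suc i))"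
    by blast
  define n where "n i = fst (f i)" for i
  define d where "d i = snd (snd (f (i - 1)))" for i
  have n_Suc: "n (Suc i) = fst (snd (f i))" for i
    using Q unfolding n_def Q_def by simp
  have "n 0 = n0 \<and> n 1 = m1 \<and> d 1 = c1"
    using P[of 0] n_Suc[of 0] unfolding P_def n_def d_def by simp
  moreover have "columns_generate (n (Suc j)) (matrix_kernel (n j) (n (Suc j)) (d (Suc j)))
      (n (Suc (Suc j))) (d (Suc (Suc j)))" for j
    using Q[of j] Q[of "Suc j"] unfolding Q_def by (simp add: n_Suc n_def d_def)
  ultimately show ?thesis by blast
qed

lemma (in module) vec_submodule_relations: "vec_submodule {a. (\<Sum>j<m. a j *s g j) = 0}"
proof -
  have "(\<Sum>j<m. (c * a j) *s g j) = c *s (\<Sum>j<m. a j *s g j)" for c a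
    by (simp add: scale_sum_right)
  then show ?thesis
    unfolding vec_submodule_def by (simp add: scale_left_distrib sum.distrib)
qed

lemma fin_gen_free_resolution:
  fixes s :: "'r::comm_ring_1 \<Rightarrow> 'm::ab_group_add \<Rightarrow> 'm"
  assumes noeth: "noetherian_ring TYPE('r)" and fg: "fin_gen s"
  shows "\<exists>n d g. free_resolution s n d g"
proof -
  interpret module s
    using fg unfolding fin_gen_def by blast
  obtain n0 :: nat and g where surj: "\<forall>x. \<exists>a. x = (\<Sum>j<n0. s (a j) (g j))"
    using fin_gen_generators[OF fg] by blast
  define K where "K = {a. (\<Sum>j<n0. s (a j) (g j)) = 0}"
  have K: "vec_submodule K"
    unfolding K_def by (rule vec_submodule_relations)
  have K_cong: "a' \<in> K" if "a \<in> K" "\<forall>i<n0. a i = a' i" for a a'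
  proof -
    have "(\<Sum>j<n0. s (a j) (g j)) = (\<Sum>j<n0. s (a' j) (g j))"
      using that(2) by (intro sum.cong) auto
    with that(1) show ?thesis
      unfolding K_def by simp
  qed
  obtain m1 c1 where g1: "columns_generate n0 K m1 c1"
    using noetherian_columns_generate[OF noeth K] by blast
  obtain n d where n0: "n 0 = n0" "n 1 = m1" "d 1 = c1" and chain: "\<forall>j. columns_generate (n (Suc j))
      (matrix_kernel (n j) (n (Suc j)) (d (Suc j))) (n (Suc (Suc j))) (d (Suc (Suc j)))"
    using noetherian_kernel_chain[OF noeth] by blast
  have "free_resolution s n d g"
    unfolding free_resolution_def
  proof (intro conjI allI impI)
    fix x
    show "\<exists>a. x = (\<Sum>j<n 0. s (a j) (g j))"
      using surj n0 by simp
  next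
    fix a
    show "(\<Sum>j<n 0. s (a j) (g j)) = 0 \<longleftrightarrow> (\<exists>b. \<forall>k<n 0. a k = matvec (d 1) (n 1) b k)"
      using columns_generate_iff[OF K K_cong g1, where a=a] n0 unfolding K_def by simp
  next
    fix i :: nat and b assume "1 \<le> i"
    then obtain j where i: "i = Suc j"
      by (cases i) auto
    have "b \<in> matrix_kernel (n j) (n (Suc j)) (d (Suc j)) \<longleftrightarrow>
        (\<exists>c. \<forall>k<n (Suc j). b k = matvec (d (Suc (Suc j))) (n (Suc (Suc j))) c k)"
      by (rule columns_generate_iff[OF vec_submodule_matrix_kernel _ chain[rule_format, of j]])
        (rule matrix_kernel_cong)
    then show "(\<forall>k<n (i - 1). matvec (d i) (n i) b k = 0) \<longleftrightarrow>
        (\<exists>c. \<forall>j<n i. b j = matvec (d (i + 1)) (n (i + 1)) c j)"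
      unfolding matrix_kernel_def i by simp
  qed
  then show ?thesis by blast
qed

section \<open>The dual module\<close>

lemma is_dual_via_eq_on_generators:
  assumes mM: "module sM" and dual: "is_dual_via sM sD \<phi>"
    and S: "module.span sM S = UNIV" and eq: "\<forall>v\<in>S. \<phi> y v = \<phi> z v"
  shows "y = z"
proof -
  have bij: "bij_betw \<phi> UNIV {f. module_hom sM (*) f}"
    using dual unfolding is_dual_via_def by blast
  then have hom: "module_hom sM (*) (\<phi> x)" for x
    unfolding bij_betw_def by auto
  interpret module_pair sM "(*) :: 'a \<Rightarrow> 'a \<Rightarrow> 'a"
    by (simp add: module_pair_def mM module_mult)
  have "\<phi> y v = \<phi> z v" for v
    using module_hom_eq_on_span[OF hom hom, of S] eq S by blast
  then have "\<phi> y = \<phi> z" ..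
  with bij show ?thesis
    unfolding bij_betw_def by (simp add: inj_eq)
qed

lemma is_dual_via_eq_lincomb_of_values:
  assumes mM: "module sM" and dual: "is_dual_via sM sD \<phi>" and u: "module.span sM (u ` {..<k}) = UNIV"
    and x: "\<forall>j<m. \<forall>i<k. c i j = \<phi> (x j) (u i)" and y: "\<forall>i<k. \<phi> y (u i) = matvec c m b i"
  shows "y = (\<Sum>j<m. sD (b j) (x j))"
proof -
  have "\<phi> y (u i) = \<phi> (\<Sum>j<m. sD (b j) (x j)) (u i)" if "i < k" for i
  proof -
    have "\<phi> y (u i) = (\<Sum>j<m. c i j * b j)"
      using y that unfolding matvec_def by simp
    also have "\<dots> = \<phi> (\<Sum>j<m. sD (b j) (x j)) (u i)"
      unfolding is_dual_via_lincomb[OF dual] using x that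
      by (intro sum.cong) (simp_all add: mult.commute)
    finally show ?thesis .
  qed
  then show ?thesis
    using is_dual_via_eq_on_generators[OF mM dual u] by blast
qed

lemma vec_submodule_dual_values:
  assumes "is_dual_via sM sD \<phi>"
  shows "vec_submodule (range (\<lambda>y i. \<phi> y (u i)))"
  unfolding vec_submodule_def
proof (intro conjI ballI allI)
  show "(\<lambda>_. 0) \<in> range (\<lambda>y i. \<phi> y (u i))"
    using additive.zero[OF is_dual_via_additive[OF assms]] by (intro image_eqI[of _ _ 0]) auto
next
  fix a b assume "a \<in> range (\<lambda>y i. \<phi> y (u i))" "b \<in> range (\<lambda>y i. \<phi> y (u i))"
  then obtain y z where "a = (\<lambda>i. \<phi> y (u i))" "b = (\<lambda>i. \<phi> z (u i))" by blast
  with assms show "(\<lambda>i. a i + b i) \<in> range (\<lambda>y i. \<phi> y (u i))"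
    unfolding is_dual_via_def by (intro image_eqI[of _ _ "y + z"]) auto
next
  fix c a assume "a \<in> range (\<lambda>y i. \<phi> y (u i))"
  then obtain y where "a = (\<lambda>i. \<phi> y (u i))" by blast
  with assms show "(\<lambda>i. c * a i) \<in> range (\<lambda>y i. \<phi> y (u i))"
    unfolding is_dual_via_def by (intro image_eqI[of _ _ "sD c y"]) auto
qed

text \<open>Evaluation at generators \<open>u\<^sub>0, \<dots>, u\<^sub>k\<^sub>-\<^sub>1\<close> of \<open>M\<close> embeds \<open>M\<^sup>*\<close> into \<open>R\<^sup>k\<close>; over a
  Noetherian ring the image is finitely generated.\<close>
lemma fin_gen_dual:
  fixes sM :: "'r::comm_ring_1 \<Rightarrow> 'm::ab_group_add \<Rightarrow> 'm" and sD :: "'r \<Rightarrow> 'd::ab_group_add \<Rightarrow> 'd"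
  assumes noeth: "noetherian_ring TYPE('r)" and fg: "fin_gen sM" and mD: "module sD"
    and dual: "is_dual_via sM sD \<phi>"
  shows "fin_gen sD"
proof -
  interpret module sD by fact
  from fg obtain S where mM: "module sM" and S: "finite S" "module.span sM S = UNIV"
    unfolding fin_gen_def by blast
  obtain k :: nat and u where u: "S = u ` {..<k}"
    using finite_imp_nat_seg_image_inj_on[OF S(1)] by (auto simp: lessThan_def)
  define V where "V = range (\<lambda>y i. \<phi> y (u i))"
  have "vec_submodule V"
    unfolding V_def by (rule vec_submodule_dual_values[OF dual])
  then obtain m c where g: "columns_generate k V m c"
    using noetherian_columns_generate[OF noeth] by blast
  have "\<exists>x. j < m \<longrightarrow> (\<forall>i<k. c i j = \<phi> x (u i))" for j
  proof (cases "j < m")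
    case True
    with g obtain a where "a \<in> V" "\<forall>i<k. c i j = a i"
      unfolding columns_generate_def by blast
    then show ?thesis
      unfolding V_def by auto
  qed simp
  then obtain x where x: "\<forall>j<m. \<forall>i<k. c i j = \<phi> (x j) (u i)"
    using choice[of "\<lambda>j x. j < m \<longrightarrow> (\<forall>i<k. c i j = \<phi> x (u i))"] by blast
  have "y \<in> span (x ` {..<m})" for y
  proof -
    have "(\<lambda>i. \<phi> y (u i)) \<in> V"
      unfolding V_def by simp
    with g obtain b where b: "\<forall>i<k. \<phi> y (u i) = matvec c m b i"
      unfolding columns_generate_def by fastforce
    then have "y = (\<Sum>j<m. sD (b j) (x j))"
      using is_dual_via_eq_lincomb_of_values[OF mM dual _ x] S(2) u by blast
    moreover have "(\<Sum>j<m. sD (b j) (x j)) \<in> span (x ` {..<m})"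
      by (intro span_sum span_scale span_base) auto
    ultimately show ?thesis by simp
  qed
  then have "span (x ` {..<m}) = UNIV"
    by blast
  then show ?thesis
    unfolding fin_gen_def using mD by (intro conjI exI[of _ "x ` {..<m}"]) auto
qed

lemma in_E_dsum_scale:
  fixes s1 :: "'r::comm_ring_1 \<Rightarrow> 'm::ab_group_add \<Rightarrow> 'm" and s2 :: "'r \<Rightarrow> 'n::ab_group_add \<Rightarrow> 'n"
  assumes m1: "module s1" and m2: "module s2" and res2: "free_resolution s2 n' d' g'"
    and sub: "stable_ann s1 \<subseteq> stable_ann s2" and E: "in_E s1"
  shows "in_E (dsum_scale s1 s2)"
proof -
  have m12: "module (dsum_scale s1 s2)"
    using module_dsum_scale[OF m1 m2] .
  have mX: "module (dsum_scale s1 ((*) :: 'r \<Rightarrow> 'r \<Rightarrow> 'r))"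
    using module_dsum_scale[OF m1 module_mult] .
  have mX': "module (dsum_scale (dsum_scale s1 s2) ((*) :: 'r \<Rightarrow> 'r \<Rightarrow> 'r))"
    using module_dsum_scale[OF m12 module_mult] .
  define \<iota> :: "'m \<times> 'r \<Rightarrow> ('m \<times> 'n) \<times> 'r" where "\<iota> z = ((fst z, 0), snd z)" for z
  define \<pi> :: "('m \<times> 'n) \<times> 'r \<Rightarrow> 'm \<times> 'r" where "\<pi> z = (fst (fst z), snd z)" for z
  have hi: "module_hom (dsum_scale s1 (*)) (dsum_scale (dsum_scale s1 s2) (*)) \<iota>"
    using mX mX' m2 by (simp add: module_hom_iff \<iota>_def dsum_scale_def module.scale_zero_right)
  have hp: "module_hom (dsum_scale (dsum_scale s1 s2) (*)) (dsum_scale s1 (*)) \<pi>"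
    using mX mX' by (simp add: module_hom_iff \<pi>_def dsum_scale_def)
  have retract: "\<forall>z. \<pi> (\<iota> z) = z"
    by (simp add: \<pi>_def \<iota>_def)
  have "ARann (dsum_scale s1 s2) \<subseteq> ARann s1"
    unfolding ARann_def using ann_Ext_dsum_scale_subset[OF m1 m2 hi hp retract res2] by blast
  also have "\<dots> = stable_ann s1"
    using E unfolding in_E_def by simp
  also have "\<dots> \<subseteq> stable_ann (dsum_scale s1 s2)"
    using stable_ann_dsum_scale[OF m1 m2] sub by blast
  finally have "ARann (dsum_scale s1 s2) \<subseteq> stable_ann (dsum_scale s1 s2)" .
  moreover have "stable_ann (dsum_scale s1 s2) \<subseteq> ARann (dsum_scale s1 s2)"
    unfolding ARann_def using stable_ann_subset_ann_Ext[OF m12 mX'] by blast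
  ultimately show ?thesis
    unfolding in_E_def by blast
qed

theorem mainTheorem14:
  fixes sM :: "'r::comm_ring_1 \<Rightarrow> 'm::ab_group_add \<Rightarrow> 'm"
    and sN :: "'r \<Rightarrow> 'n::ab_group_add \<Rightarrow> 'n"
    and sD :: "'r \<Rightarrow> 'd::ab_group_add \<Rightarrow> 'd"
    and \<phi> :: "'d \<Rightarrow> 'm \<Rightarrow> 'r"
  assumes "noetherian_ring TYPE('r)" and "local_ring TYPE('r)"
    and "fin_gen sM" and "fin_gen sN"
    and "module sD" and "is_dual_via sM sD \<phi>"
  shows "(stable_ann sM \<subseteq> stable_ann sN \<and> in_E sM \<longrightarrow> in_E (dsum_scale sM sN))
    \<and> (in_E sM \<longrightarrow> in_E (dsum_scale sM sD))"
proof -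
  have mM: "module sM" and mN: "module sN"
    using assms(3,4) unfolding fin_gen_def by blast+
  obtain nN dN gN where resN: "free_resolution sN nN dN gN"
    using fin_gen_free_resolution[OF assms(1,4)] by blast
  obtain nD dD gD where resD: "free_resolution sD nD dD gD"
    using fin_gen_free_resolution[OF assms(1) fin_gen_dual[OF assms(1,3,5,6)]] by blast
  have "stable_ann sM \<subseteq> stable_ann sD"
    using stable_ann_dual[OF mM assms(5,6)] by blast
  then show ?thesis
    using in_E_dsum_scale[OF mM mN resN] in_E_dsum_scale[OF mM assms(5) resD] by blast
qed

end
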